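(* Let $p\in(1,\infty)$, $\lambda>0$, and let $E$ be a Banach space with a normalized $1$-unconditional basis $(e_n)_{n\in\mathbb N}$ which is $p$-convex with convexity constant $1$. For every $n\in\mathbb N$ and every finite sequence $(X_j)_{j=1}^n$ of Banach spaces each having property $\lambda$-HIC$_{p,d}$, the space $\left(\sum_{j=1}^n X_j\right)_E$ has property $(\lambda+\varepsilon)$-HIC$_{p,d}$ for each $\varepsilon>0$.
   Context: For infinite $\mathbb M\subseteq\mathbb N$ and $k\in\mathbb N$, $[\mathbb M]^k$ is the set of $\bar n=(n_1,\dots,n_k)\in\mathbb M^k$ with $n_1<\dots<n_k$, with Hamming distance $d_{\mathbb H}(\bar n,\bar m)=|\{j:n_j\ne m_j\}|$; $[\mathbb M]^\omega$ is the set of infinite subsets of $\mathbb M$; $I_k(\mathbb M)=\{(\bar n,\bar m): n_1<m_1<\dots<n_k<m_k\}$; $H_j(\mathbb M)=\{(\bar n,\bar m)\in([\mathbb M]^k)^2: n_i=m_i\ (i\ne j),\ n_j<m_j\}$. A metric space $(M,d)$ has $\lambda$-HIC$_{p,d}$ if for every $k$ and every Lipschitz $f:([\mathbb N]^k,d_{\mathbb H})\to M$ there is $\mathbb M\in[\mathbb N]^\omega$ with $d(f(\bar n),f(\bar m))\le\lambda(\sum_{j=1}^k\alpha_j^p)^{1/p}$ for all $(\bar n,\bar m)\in I_k(\mathbb M)$, where $\alpha_j=\sup_{(\bar n,\bar m)\in H_j(\mathbb N)}d(f(\bar n),f(\bar m))$. The finite sum $\left(\sum_{j=1}^n X_j\right)_E$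 is $X_1\times\dots\times X_n$ with norm $\|(x_1,\dots,x_n)\|=\|\sum_{j=1}^n\|x_j\|e_j\|_E$. The basis is $p$-convex with convexity constant $1$ if $\|\sum_j(|x^1_j|^p+\dots+|x^k_j|^p)^{1/p}e_j\|^p\le\sum_{m=1}^k\|x^m\|^p$ for all $k$ and all $x^m=\sum_jx^m_je_j\in E$. *)

theory Defs
  imports "HOL-Analysis.Analysis"
begin

definition has_coeffs :: "(nat \<Rightarrow> 'e::real_normed_vector) \<Rightarrow> 'e \<Rightarrow> (nat \<Rightarrow> real) \<Rightarrow> bool" where
  "has_coeffs e x a \<longleftrightarrow> (\<lambda>N. \<Sum>j<N. a j *\<^sub>R e j) \<longlonglongrightarrow> x"

definition schauder_basis :: "(nat \<Rightarrow> 'e::real_normed_vector) \<Rightarrow> bool" where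
  "schauder_basis e \<longleftrightarrow> (\<forall>x. \<exists>!a. has_coeffs e x a)"

definition normalized_basis :: "(nat \<Rightarrow> 'e::real_normed_vector) \<Rightarrow> bool" where
  "normalized_basis e \<longleftrightarrow> (\<forall>j. norm (e j) = 1)"

definition one_unconditional :: "(nat \<Rightarrow> 'e::real_normed_vector) \<Rightarrow> bool" where
  "one_unconditional e \<longleftrightarrow>
     (\<forall>N a s. (\<forall>j. s j = 1 \<or> s j = -1) \<longrightarrow>
        norm (\<Sum>j<N. (s j * a j) *\<^sub>R e j) = norm (\<Sum>j<N. a j *\<^sub>R e j))"

definition p_convex_one :: "real \<Rightarrow> (nat \<Rightarrow> 'e::real_normed_vector) \<Rightarrow> bool" where
  "p_convex_one p e \<longleftrightarrow>
     (\<forall>k (x :: nat \<Rightarrow> 'e) (a :: nat \<Rightarrow> nat \<Rightarrow> real) y.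
        (\<forall>m<k. has_coeffs e (x m) (a m)) \<longrightarrow>
        has_coeffs e y (\<lambda>j. (\<Sum>m<k. \<bar>a m j\<bar> powr p) powr (1/p)) \<longrightarrow>
        norm y powr p \<le> (\<Sum>m<k. norm (x m) powr p))"

text \<open>[M]^k as strictly increasing lists of length k with entries in M\<close>
definition incr_tuples :: "nat \<Rightarrow> nat set \<Rightarrow> nat list set" where
  "incr_tuples k M = {ns. length ns = k \<and> sorted_wrt (<) ns \<and> set ns \<subseteq> M}"

definition hamming :: "nat list \<Rightarrow> nat list \<Rightarrow> nat" where
  "hamming ns ms = card {j. j < length ns \<and> ns ! j \<noteq> ms ! j}"

definition I_pairs :: "nat \<Rightarrow> nat set \<Rightarrow> (nat list \<times> nat list) set" where
  "I_pairs k M = {(ns, ms). ns \<in> incr_tuples k M \<and> ms \<in> incr_tuples k M \<and>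
      (\<forall>i<k. ns ! i < ms ! i) \<and> (\<forall>i. Suc i < k \<longrightarrow> ms ! i < ns ! Suc i)}"

definition H_pairs :: "nat \<Rightarrow> nat \<Rightarrow> nat set \<Rightarrow> (nat list \<times> nat list) set" where
  "H_pairs k j M = {(ns, ms). ns \<in> incr_tuples k M \<and> ms \<in> incr_tuples k M \<and>
      (\<forall>i<k. i \<noteq> j \<longrightarrow> ns ! i = ms ! i) \<and> ns ! j < ms ! j}"

definition lipschitz_hamming :: "nat \<Rightarrow> ('m \<Rightarrow> 'm \<Rightarrow> real) \<Rightarrow> (nat list \<Rightarrow> 'm) \<Rightarrow> bool" where
  "lipschitz_hamming k d f \<longleftrightarrow> (\<exists>L. \<forall>ns\<in>incr_tuples k UNIV. \<forall>ms\<in>incr_tuples k UNIV.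
      d (f ns) (f ms) \<le> L * real (hamming ns ms))"

definition HIC :: "real \<Rightarrow> real \<Rightarrow> 'm set \<Rightarrow> ('m \<Rightarrow> 'm \<Rightarrow> real) \<Rightarrow> bool" where
  "HIC lam p M d \<longleftrightarrow>
     (\<forall>k (f :: nat list \<Rightarrow> 'm).
        f ` incr_tuples k UNIV \<subseteq> M \<and> lipschitz_hamming k d f \<longrightarrow>
        (\<exists>N. infinite N \<and>
           (\<forall>(ns, ms)\<in>I_pairs k N.
              d (f ns) (f ms) \<le> lam *
                (\<Sum>j<k. (Sup {d (f ns') (f ms') | ns' ms'. (ns', ms') \<in> H_pairs k j UNIV}) powr p)
                  powr (1/p))))"

definition sum_space :: "nat \<Rightarrow> (nat \<Rightarrow> 'a::real_normed_vector set) \<Rightarrow> (nat \<Rightarrow> 'a) set" where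
  "sum_space n X = {x. (\<forall>j<n. x j \<in> X j) \<and> (\<forall>j\<ge>n. x j = 0)}"

definition sum_norm :: "(nat \<Rightarrow> 'e::real_normed_vector) \<Rightarrow> nat \<Rightarrow> (nat \<Rightarrow> 'a::real_normed_vector) \<Rightarrow> real" where
  "sum_norm e n x = norm (\<Sum>j<n. norm (x j) *\<^sub>R e j)"

definition sum_dist :: "(nat \<Rightarrow> 'e::real_normed_vector) \<Rightarrow> nat \<Rightarrow> (nat \<Rightarrow> 'a::real_normed_vector) \<Rightarrow> (nat \<Rightarrow> 'a) \<Rightarrow> real" where
  "sum_dist e n x y = sum_norm e n (\<lambda>j. x j - y j)"

end

theory Submission
  imports Defs "HOL-Library.Ramsey"
begin

(* Let f be a Lipschitz map into the E-sum and alpha_i the supremum of its distances along the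
   direction H_i. For every direction i and coordinate j, Ramsey's theorem yields an infinite set on
   which the coordinate distances ||f(ns)_j - f(ms)_j|| over H_i-pairs vary by less than eta.
   Reading them off a single pair gives bounds beta_ij with ||sum_j beta_ij e_j|| <= (1 + delta) alpha_i.
   Applying HIC in each X_j on a further infinite set bounds the j-th coordinate distance on
   interlaced pairs by lam (sum_i beta_ij^p)^(1/p); monotonicity of the 1-unconditional norm and
   p-convexity with constant 1 turn this into lam (1 + delta) (sum_i alpha_i^p)^(1/p).
   Only finite expansions in (e_n) occur. *)

section \<open>Lattice estimates for 1-unconditional p-convex bases\<close>

lemma norm_add_scaleR_le_if_symmetric:
  fixes w u :: "'v::real_normed_vector"
  assumes sym: "norm (w - u) = norm (w + u)" and r: "\<bar>r\<bar> \<le> 1"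
  shows "norm (w + r *\<^sub>R u) \<le> norm (w + u)"
proof -
  have "((1 + r) / 2) *\<^sub>R (w + u) + ((1 - r) / 2) *\<^sub>R (w - u)
      = ((1 + r) / 2 + (1 - r) / 2) *\<^sub>R w + ((1 + r) / 2 - (1 - r) / 2) *\<^sub>R u"
    by (simp add: algebra_simps)
  also have "\<dots> = w + r *\<^sub>R u"
    by (simp add: field_simps)
  finally have "norm (w + r *\<^sub>R u)
      \<le> norm (((1 + r) / 2) *\<^sub>R (w + u)) + norm (((1 - r) / 2) *\<^sub>R (w - u))"
    by (metis norm_triangle_ineq)
  also have "\<dots> = ((1 + r) / 2) * norm (w + u) + ((1 - r) / 2) * norm (w - u)"
    using r by simp
  also have "\<dots> = norm (w + u)"
    using sym by (simp add: field_simps)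
  finally show ?thesis .
qed

lemma one_unconditional_norm_flip:
  fixes e :: "nat \<Rightarrow> 'e::real_normed_vector" and c :: "nat \<Rightarrow> real"
  assumes unc: "one_unconditional e" and j: "j < n"
  defines "w \<equiv> (\<Sum>i\<in>{..<n} - {j}. c i *\<^sub>R e i)"
  shows "norm (w - c j *\<^sub>R e j) = norm (w + c j *\<^sub>R e j)"
proof -
  define s :: "nat \<Rightarrow> real" where "s i = (if i = j then -1 else 1)" for i
  have jn: "j \<in> {..<n}" using j by simp
  have "(\<Sum>i<n. (s i * c i) *\<^sub>R e i)
      = (s j * c j) *\<^sub>R e j + (\<Sum>i\<in>{..<n} - {j}. (s i * c i) *\<^sub>R e i)"
    by (rule sum.remove[OF finite_lessThan jn])
  also have "(\<Sum>i\<in>{..<n} - {j}. (s i * c i) *\<^sub>R e i) = w"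
    unfolding w_def s_def by (intro sum.cong) auto
  finally have "(\<Sum>i<n. (s i * c i) *\<^sub>R e i) = w - c j *\<^sub>R e j"
    by (simp add: s_def)
  moreover have "(\<Sum>i<n. c i *\<^sub>R e i) = w + c j *\<^sub>R e j"
    unfolding w_def by (simp add: sum.remove[OF finite_lessThan jn])
  moreover have "norm (\<Sum>i<n. (s i * c i) *\<^sub>R e i) = norm (\<Sum>i<n. c i *\<^sub>R e i)"
    using unc unfolding one_unconditional_def s_def by simp
  ultimately show ?thesis by simp
qed

lemma one_unconditional_norm_update_le:
  fixes e :: "nat \<Rightarrow> 'e::real_normed_vector"
  assumes unc: "one_unconditional e" and t: "\<bar>t\<bar> \<le> c j"
  shows "norm (\<Sum>i<n. (c(j := t)) i *\<^sub>R e i) \<le> norm (\<Sum>i<n. c i *\<^sub>R e i)"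
proof (cases "j < n")
  case False
  then have "(\<Sum>i<n. (c(j := t)) i *\<^sub>R e i) = (\<Sum>i<n. c i *\<^sub>R e i)"
    by (intro sum.cong) auto
  then show ?thesis by simp
next
  case True
  define w where "w = (\<Sum>i\<in>{..<n} - {j}. c i *\<^sub>R e i)"
  have jn: "j \<in> {..<n}" using True by simp
  have "(\<Sum>i\<in>{..<n} - {j}. (c(j := t)) i *\<^sub>R e i) = w"
    unfolding w_def by (intro sum.cong) auto
  then have upd: "(\<Sum>i<n. (c(j := t)) i *\<^sub>R e i) = w + t *\<^sub>R e j"
    by (simp add: sum.remove[OF finite_lessThan jn] add.commute)
  have orig: "(\<Sum>i<n. c i *\<^sub>R e i) = w + c j *\<^sub>R e j"
    unfolding w_def by (simp add: sum.remove[OF finite_lessThan jn] add.commute)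
  have sym: "norm (w - c j *\<^sub>R e j) = norm (w + c j *\<^sub>R e j)"
    unfolding w_def by (rule one_unconditional_norm_flip[OF unc True])
  show ?thesis
  proof (cases "c j = 0")
    case True
    then have "c(j := t) = c" using t by auto
    then show ?thesis by simp
  next
    case False
    then have cj: "c j > 0" using t by linarith
    have "w + t *\<^sub>R e j = w + (t / c j) *\<^sub>R (c j *\<^sub>R e j)" using cj by simp
    moreover have "\<bar>t / c j\<bar> \<le> 1" using cj t by (simp add: abs_divide divide_le_eq)
    ultimately show ?thesis
      unfolding upd orig using norm_add_scaleR_le_if_symmetric[OF sym] by metis
  qed
qed

lemma one_unconditional_norm_mono:
  fixes e :: "nat \<Rightarrow> 'e::real_normed_vector"
  assumes unc: "one_unconditional e" and le: "\<And>i. i < n \<Longrightarrow> \<bar>a i\<bar> \<le> b i"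
  shows "norm (\<Sum>i<n. a i *\<^sub>R e i) \<le> norm (\<Sum>i<n. b i *\<^sub>R e i)"
proof -
  define c where "c m i = (if i < m then b i else a i)" for m i
  have "norm (\<Sum>i<n. c 0 i *\<^sub>R e i) \<le> norm (\<Sum>i<n. c m i *\<^sub>R e i)" if "m \<le> n" for m
    using that
  proof (induction m)
    case 0
    then show ?case by simp
  next
    case (Suc m)
    have "c m = (c (Suc m))(m := a m)" and "\<bar>a m\<bar> \<le> c (Suc m) m"
      using le Suc.prems by (auto simp: c_def)
    then have "norm (\<Sum>i<n. c m i *\<^sub>R e i) \<le> norm (\<Sum>i<n. c (Suc m) i *\<^sub>R e i)"
      by (metis one_unconditional_norm_update_le[OF unc])
    then show ?case using Suc by simp
  qed
  moreover have "c 0 = a" "\<And>i. i < n \<Longrightarrow> c n i = b i"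
    by (auto simp: c_def)
  ultimately show ?thesis
    by (metis (no_types, lifting) order_refl lessThan_iff sum.cong)
qed

lemma one_unconditional_coeff_le_norm:
  fixes e :: "nat \<Rightarrow> 'e::real_normed_vector"
  assumes unc: "one_unconditional e" and nb: "normalized_basis e" and j: "j < n"
    and nn: "\<And>i. i < n \<Longrightarrow> 0 \<le> b i"
  shows "b j \<le> norm (\<Sum>i<n. b i *\<^sub>R e i)"
proof -
  have "(\<Sum>i<n. (if i = j then b j else 0) *\<^sub>R e i) = b j *\<^sub>R e j"
    using j by (simp add: if_distrib[of "\<lambda>x. x *\<^sub>R _"] cong: if_cong)
  moreover have "norm (b j *\<^sub>R e j) = b j"
    using nb nn[OF j] unfolding normalized_basis_def by simp
  moreover have "norm (\<Sum>i<n. (if i = j then b j else 0) *\<^sub>R e i) \<le> norm (\<Sum>i<n. b i *\<^sub>R e i)"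
    by (rule one_unconditional_norm_mono[OF unc]) (use nn in auto)
  ultimately show ?thesis by simp
qed

lemma sum_dist_nonneg [simp]: "0 \<le> sum_dist e n x y"
  unfolding sum_dist_def sum_norm_def by simp

lemma norm_coordinate_le_sum_dist:
  fixes e :: "nat \<Rightarrow> 'e::real_normed_vector"
  assumes "one_unconditional e" and "normalized_basis e" and "j < n"
  shows "norm (x j - y j) \<le> sum_dist e n x y"
  unfolding sum_dist_def sum_norm_def
  by (rule one_unconditional_coeff_le_norm[OF assms]) simp

lemma norm_sum_normalized_basis_le:
  assumes "normalized_basis e"
  shows "norm (\<Sum>i<n. e i) \<le> real n"
  using norm_sum[of e "{..<n}"] assms unfolding normalized_basis_def by simp

lemma norm_shifted_coordinates_le:
  fixes e :: "nat \<Rightarrow> 'e::real_normed_vector" and x y :: "nat \<Rightarrow> 'a::real_normed_vector"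
  assumes nb: "normalized_basis e" and \<eta>: "0 \<le> \<eta>"
  shows "norm (\<Sum>j<n. (norm (x j - y j) + \<eta>) *\<^sub>R e j) \<le> sum_dist e n x y + \<eta> * real n"
proof -
  have "(\<Sum>j<n. (norm (x j - y j) + \<eta>) *\<^sub>R e j) = (\<Sum>j<n. norm (x j - y j) *\<^sub>R e j) + \<eta> *\<^sub>R (\<Sum>j<n. e j)"
    by (simp add: scaleR_add_left sum.distrib scaleR_sum_right)
  then have "norm (\<Sum>j<n. (norm (x j - y j) + \<eta>) *\<^sub>R e j) \<le> sum_dist e n x y + \<eta> * norm (\<Sum>j<n. e j)"
    unfolding sum_dist_def sum_norm_def
    using norm_triangle_ineq[of "\<Sum>j<n. norm (x j - y j) *\<^sub>R e j" "\<eta> *\<^sub>R (\<Sum>j<n. e j)"] \<eta>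
    by simp
  also have "\<eta> * norm (\<Sum>j<n. e j) \<le> \<eta> * real n"
    using norm_sum_normalized_basis_le[OF nb] \<eta> by (simp add: mult_left_mono)
  finally show ?thesis by simp
qed

lemma has_coeffs_finite_sum:
  assumes "\<And>j. n \<le> j \<Longrightarrow> a j = 0"
  shows "has_coeffs e (\<Sum>j<n. a j *\<^sub>R e j) a"
  unfolding has_coeffs_def
proof (rule tendsto_eventually, rule eventually_sequentiallyI)
  fix N assume "n \<le> N"
  then show "(\<Sum>j<N. a j *\<^sub>R e j) = (\<Sum>j<n. a j *\<^sub>R e j)"
    using assms by (intro sum.mono_neutral_right) auto
qed

lemma p_convex_one_norm_le:
  fixes e :: "nat \<Rightarrow> 'e::real_normed_vector" and \<beta> :: "nat \<Rightarrow> nat \<Rightarrow> real"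
  assumes pc: "p_convex_one p e" and p: "0 < p"
    and nn: "\<And>i j. i < k \<Longrightarrow> j < n \<Longrightarrow> 0 \<le> \<beta> i j"
    and B: "\<And>i. i < k \<Longrightarrow> norm (\<Sum>j<n. \<beta> i j *\<^sub>R e j) \<le> B i"
  shows "norm (\<Sum>j<n. (\<Sum>i<k. \<beta> i j powr p) powr (1/p) *\<^sub>R e j) \<le> (\<Sum>i<k. B i powr p) powr (1/p)"
proof -
  define a where "a i j = (if j < n then \<beta> i j else 0)" for i j
  define y where "y = (\<Sum>j<n. (\<Sum>i<k. \<bar>a i j\<bar> powr p) powr (1/p) *\<^sub>R e j)"
  have "has_coeffs e (\<Sum>j<n. a i j *\<^sub>R e j) (a i)" for i
    by (rule has_coeffs_finite_sum) (simp add: a_def)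
  moreover have "has_coeffs e y (\<lambda>j. (\<Sum>i<k. \<bar>a i j\<bar> powr p) powr (1/p))"
    unfolding y_def by (rule has_coeffs_finite_sum) (simp add: a_def)
  ultimately have "norm y powr p \<le> (\<Sum>i<k. norm (\<Sum>j<n. a i j *\<^sub>R e j) powr p)"
    using pc[unfolded p_convex_one_def, rule_format, of k "\<lambda>i. \<Sum>j<n. a i j *\<^sub>R e j" a y]
    by blast
  also have "\<dots> \<le> (\<Sum>i<k. B i powr p)"
    using B p by (intro sum_mono powr_mono2) (auto simp: a_def)
  finally have le: "norm y powr p \<le> (\<Sum>i<k. B i powr p)" .
  have "norm y = (norm y powr p) powr (1/p)"
    using p by (simp add: powr_powr)
  also have "\<dots> \<le> (\<Sum>i<k. B i powr p) powr (1/p)"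
    using le p by (intro powr_mono2) auto
  finally have "norm y \<le> (\<Sum>i<k. B i powr p) powr (1/p)" .
  moreover have "y = (\<Sum>j<n. (\<Sum>i<k. \<beta> i j powr p) powr (1/p) *\<^sub>R e j)"
    unfolding y_def using nn by (intro sum.cong refl) (simp add: a_def)
  ultimately show ?thesis by simp
qed

lemma sum_dist_le_of_coordinate_bounds:
  fixes e :: "nat \<Rightarrow> 'e::real_normed_vector" and x y :: "nat \<Rightarrow> 'a::real_normed_vector"
    and \<beta> :: "nat \<Rightarrow> nat \<Rightarrow> real"
  assumes unc: "one_unconditional e" and pc: "p_convex_one p e" and p: "0 < p" and lam: "0 \<le> lam"
    and nn: "\<And>i j. i < k \<Longrightarrow> j < n \<Longrightarrow> 0 \<le> \<beta> i j"
    and rows: "\<And>i. i < k \<Longrightarrow> norm (\<Sum>j<n. \<beta> i j *\<^sub>R e j) \<le> B i"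
    and coords: "\<And>j. j < n \<Longrightarrow> norm (x j - y j) \<le> lam * (\<Sum>i<k. \<beta> i j powr p) powr (1/p)"
  shows "sum_dist e n x y \<le> lam * (\<Sum>i<k. B i powr p) powr (1/p)"
proof -
  have "sum_dist e n x y \<le> norm (\<Sum>j<n. (lam * (\<Sum>i<k. \<beta> i j powr p) powr (1/p)) *\<^sub>R e j)"
    unfolding sum_dist_def sum_norm_def using coords by (intro one_unconditional_norm_mono[OF unc]) simp
  also have "(\<Sum>j<n. (lam * (\<Sum>i<k. \<beta> i j powr p) powr (1/p)) *\<^sub>R e j)
      = lam *\<^sub>R (\<Sum>j<n. (\<Sum>i<k. \<beta> i j powr p) powr (1/p) *\<^sub>R e j)"
    by (simp add: scaleR_sum_right)
  also have "norm \<dots> = lam * norm (\<Sum>j<n. (\<Sum>i<k. \<beta> i j powr p) powr (1/p) *\<^sub>R e j)"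
    using lam by simp
  also have "\<dots> \<le> lam * (\<Sum>i<k. B i powr p) powr (1/p)"
    using p_convex_one_norm_le[OF pc p nn rows] lam by (rule mult_left_mono)
  finally show ?thesis .
qed

lemma sum_powr_scale:
  fixes a :: "'i \<Rightarrow> real"
  assumes c: "0 \<le> c" and p: "0 < p" and a: "\<And>i. i \<in> I \<Longrightarrow> 0 \<le> a i"
  shows "(\<Sum>i\<in>I. (c * a i) powr p) powr (1/p) = c * (\<Sum>i\<in>I. a i powr p) powr (1/p)"
proof -
  have "(\<Sum>i\<in>I. (c * a i) powr p) = c powr p * (\<Sum>i\<in>I. a i powr p)"
    unfolding sum_distrib_left using c a by (intro sum.cong) (auto simp: powr_mult)
  then show ?thesis
    using c p by (simp add: powr_mult powr_powr sum_nonneg)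
qed

section \<open>Increasing tuples and H-pairs\<close>

lemma incr_tuples_map:
  assumes h: "strict_mono h" and ns: "ns \<in> incr_tuples k M"
  shows "map h ns \<in> incr_tuples k (h ` M)"
proof -
  have "sorted_wrt (<) (map h ns)"
    using ns h unfolding incr_tuples_def sorted_wrt_map
    by (auto intro: sorted_wrt_mono_rel[of _ "(<)"] simp: strict_mono_less)
  then show ?thesis using ns unfolding incr_tuples_def by auto
qed

lemma incr_tuples_pullback:
  assumes h: "strict_mono h" and ns: "ns \<in> incr_tuples k (h ` N)"
  shows "map (inv h) ns \<in> incr_tuples k N" and "map h (map (inv h) ns) = ns"
proof -
  have sub: "set ns \<subseteq> h ` N" using ns unfolding incr_tuples_def by auto
  show eq: "map h (map (inv h) ns) = ns"
    unfolding map_map by (rule map_idI) (use sub in \<open>auto simp: f_inv_into_f\<close>)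
  have "set (map (inv h) ns) \<subseteq> N"
    using sub strict_mono_imp_inj_on[OF h] by auto
  moreover have "sorted_wrt (<) (map (inv h) ns)"
  proof -
    have "sorted_wrt (<) (map h (map (inv h) ns))" using eq ns unfolding incr_tuples_def by simp
    then show ?thesis unfolding sorted_wrt_map[of _ h] using strict_mono_less[OF h]
      by (auto intro: sorted_wrt_mono_rel[of _ "\<lambda>x y. h x < h y"])
  qed
  ultimately show "map (inv h) ns \<in> incr_tuples k N" using ns unfolding incr_tuples_def by auto
qed

lemma hamming_map:
  assumes "inj h" and "length ns = length ms"
  shows "hamming (map h ns) (map h ms) = hamming ns ms"
proof -
  have "{j. j < length (map h ns) \<and> map h ns ! j \<noteq> map h ms ! j} = {j. j < length ns \<and> ns ! j \<noteq> ms ! j}"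
    using assms by (auto simp: inj_eq)
  then show ?thesis unfolding hamming_def by simp
qed

lemma hamming_le_length: "hamming ns ms \<le> length ns"
  unfolding hamming_def by (rule card_mono[of "{..<length ns}", simplified]) auto

lemma I_pairs_mono: "N' \<subseteq> N \<Longrightarrow> I_pairs k N' \<subseteq> I_pairs k N"
  unfolding I_pairs_def incr_tuples_def by auto

lemma H_pairs_mono: "N' \<subseteq> N \<Longrightarrow> H_pairs k i N' \<subseteq> H_pairs k i N"
  unfolding H_pairs_def incr_tuples_def by auto

lemma H_pairs_incr_tuples:
  "(ns, ms) \<in> H_pairs k i N \<Longrightarrow> ns \<in> incr_tuples k UNIV \<and> ms \<in> incr_tuples k UNIV"
  unfolding H_pairs_def incr_tuples_def by auto

lemma H_pairs_map:
  assumes h: "strict_mono h" and P: "(ns, ms) \<in> H_pairs k i M" and i: "i < k"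
  shows "(map h ns, map h ms) \<in> H_pairs k i (h ` M)"
  using P incr_tuples_map[OF h] i unfolding H_pairs_def
  by (auto simp: incr_tuples_def strict_mono_less[OF h])

lemma I_pairs_pullback:
  assumes h: "strict_mono h" and P: "(ns, ms) \<in> I_pairs k (h ` N)"
  shows "(map (inv h) ns, map (inv h) ms) \<in> I_pairs k N"
    and "map h (map (inv h) ns) = ns" and "map h (map (inv h) ms) = ms"
proof -
  have tuples: "ns \<in> incr_tuples k (h ` N)" "ms \<in> incr_tuples k (h ` N)"
    using P unfolding I_pairs_def by auto
  note pn = incr_tuples_pullback[OF h tuples(1)] and pm = incr_tuples_pullback[OF h tuples(2)]
  show "map h (map (inv h) ns) = ns" "map h (map (inv h) ms) = ms" by (fact pn(2) pm(2))+
  define ns' where "ns' = map (inv h) ns"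
  define ms' where "ms' = map (inv h) ms"
  have len: "length ns' = k" "length ms' = k"
    using pn pm unfolding ns'_def ms'_def incr_tuples_def by auto
  have hn: "h (ns' ! i) = ns ! i" and hm: "h (ms' ! i) = ms ! i" if "i < k" for i
    using pn(2) pm(2) len that unfolding ns'_def ms'_def by (metis nth_map)+
  have "h (ns' ! i) < h (ms' ! i)" if "i < k" for i
    using P that hn hm unfolding I_pairs_def by auto
  moreover have "h (ms' ! i) < h (ns' ! Suc i)" if "Suc i < k" for i
    using P that hn hm
    unfolding I_pairs_def by (auto dest: Suc_lessD)
  ultimately have "(\<forall>i<k. ns' ! i < ms' ! i) \<and> (\<forall>i. Suc i < k \<longrightarrow> ms' ! i < ns' ! Suc i)"
    using strict_mono_less[OF h] by blast
  then show "(map (inv h) ns, map (inv h) ms) \<in> I_pairs k N"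
    using pn pm unfolding I_pairs_def ns'_def ms'_def by auto
qed

lemma H_pairs_nonempty:
  assumes i: "i < k" and N: "infinite N"
  obtains ns ms where "(ns, ms) \<in> H_pairs k i N"
proof -
  define ns where "ns = map (\<lambda>t. if t \<le> i then t else Suc t) [0..<k]"
  define ms where "ms = map (\<lambda>t. if t < i then t else Suc t) [0..<k]"
  have "sorted_wrt (<) ns" "sorted_wrt (<) ms"
    unfolding ns_def ms_def sorted_wrt_map
    by (rule sorted_wrt_mono_rel[OF _ sorted_wrt_upt], auto)+
  then have "(ns, ms) \<in> H_pairs k i UNIV"
    using i unfolding H_pairs_def incr_tuples_def ns_def ms_def by auto
  from H_pairs_map[OF strict_mono_enumerate[OF N] this i] show ?thesis
    using range_enumerate[OF N] that by auto
qed

(* A (k+1)-set s_0 < ... < s_k encodes the H_i-pair obtained by deleting s_(i+1), resp. s_i,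
   so that Ramsey's theorem for (k+1)-sets acts on H_i-pairs. *)
definition H_pair_of_list :: "nat \<Rightarrow> nat list \<Rightarrow> nat list \<times> nat list" where
  "H_pair_of_list i L = (take (Suc i) L @ drop (Suc (Suc i)) L, take i L @ drop (Suc i) L)"

lemma H_pairs_merge:
  assumes P: "(ns, ms) \<in> H_pairs k i N" and i: "i < k"
  defines "L \<equiv> take (Suc i) ns @ drop i ms"
  shows "sorted_wrt (<) L" and "set L = set ns \<union> set ms" and "length L = Suc k"
    and "H_pair_of_list i L = (ns, ms)"
proof -
  have lens: "length ns = k" "length ms = k" and sn: "sorted_wrt (<) ns" and sm: "sorted_wrt (<) ms"
    and eq: "\<And>l. l < k \<Longrightarrow> l \<noteq> i \<Longrightarrow> ns ! l = ms ! l" and lt: "ns ! i < ms ! i"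
    using P unfolding H_pairs_def incr_tuples_def by auto
  have take_eq: "take i ms = take i ns"
    using lens eq by (intro nth_equalityI) auto
  have drop_eq: "drop (Suc i) ms = drop (Suc i) ns"
    using lens eq by (intro nth_equalityI) auto
  have "x \<le> ns ! i" if x: "x \<in> set (take (Suc i) ns)" for x
  proof -
    obtain l where "l < length (take (Suc i) ns)" "take (Suc i) ns ! l = x"
      using x by (meson in_set_conv_nth)
    then have "l \<le> i" "x = ns ! l" by auto
    then show ?thesis
      using sorted_wrt_nth_less[OF sn, of l i] i lens by (cases "l = i") auto
  qed
  moreover have "ms ! i \<le> y" if y: "y \<in> set (drop i ms)" for y
  proof -
    obtain l where "l < length (drop i ms)" "drop i ms ! l = y"
      using y by (meson in_set_conv_nth)
    then have "i + l < k" "y = ms ! (i + l)" using lens by auto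
    then show ?thesis
      using sorted_wrt_nth_less[OF sm, of i "i + l"] lens by (cases "l = 0") auto
  qed
  ultimately show "sorted_wrt (<) L"
    unfolding L_def sorted_wrt_append using sorted_wrt_take[OF sn] sorted_wrt_drop[OF sm] lt
    by fastforce
  show "length L = Suc k" using lens i by (simp add: L_def)
  have "set ns = set (take (Suc i) ns) \<union> set (drop (Suc i) ms)"
    unfolding drop_eq set_append[symmetric] by simp
  moreover have "set ms = set (take i ns) \<union> set (drop i ms)"
    unfolding take_eq[symmetric] set_append[symmetric] by simp
  moreover have "set (take i ns) \<subseteq> set (take (Suc i) ns)" "set (drop (Suc i) ms) \<subseteq> set (drop i ms)"
    by (simp_all add: set_take_subset_set_take set_drop_subset_set_drop)
  ultimately show "set L = set ns \<union> set ms" unfolding L_def by auto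
  show "H_pair_of_list i L = (ns, ms)"
    using i lens drop_eq unfolding H_pair_of_list_def L_def by (simp add: min_def flip: take_eq)
qed

lemma H_pair_of_list_union:
  assumes P: "(ns, ms) \<in> H_pairs k i N" and i: "i < k"
  shows "set ns \<union> set ms \<subseteq> N" and "finite (set ns \<union> set ms)" and "card (set ns \<union> set ms) = Suc k"
    and "H_pair_of_list i (sorted_list_of_set (set ns \<union> set ms)) = (ns, ms)"
proof -
  define L where "L = take (Suc i) ns @ drop i ms"
  note merge = H_pairs_merge[OF P i, folded L_def]
  show "set ns \<union> set ms \<subseteq> N" "finite (set ns \<union> set ms)"
    using P unfolding H_pairs_def incr_tuples_def by auto
  have "sorted_list_of_set (set L) = L"
    by (rule strict_sorted_equal[OF merge(1) strict_sorted_list_of_set]) simp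
  then show "H_pair_of_list i (sorted_list_of_set (set ns \<union> set ms)) = (ns, ms)"
    using merge by simp
  show "card (set ns \<union> set ms) = Suc k"
    using merge distinct_card[of L] strict_sorted_iff by auto
qed

lemma H_pairs_le_Sup:
  assumes lip: "lipschitz_hamming k d f" and P: "(ns, ms) \<in> H_pairs k i UNIV"
  shows "d (f ns) (f ms) \<le> Sup {d (f ns') (f ms') | ns' ms'. (ns', ms') \<in> H_pairs k i UNIV}"
proof (rule cSup_upper)
  obtain L where L: "\<forall>ns\<in>incr_tuples k UNIV. \<forall>ms\<in>incr_tuples k UNIV. d (f ns) (f ms) \<le> L * real (hamming ns ms)"
    using lip unfolding lipschitz_hamming_def by blast
  have "d (f ns') (f ms') \<le> \<bar>L\<bar> * real k" if "(ns', ms') \<in> H_pairs k i UNIV" for ns' ms'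
  proof -
    have tuples: "ns' \<in> incr_tuples k UNIV" "ms' \<in> incr_tuples k UNIV"
      using H_pairs_incr_tuples[OF that] by auto
    then have "hamming ns' ms' \<le> k"
      using hamming_le_length[of ns' ms'] unfolding incr_tuples_def by simp
    then have "L * real (hamming ns' ms') \<le> \<bar>L\<bar> * real k"
      by (meson abs_ge_self abs_ge_zero mult_mono of_nat_0_le_iff of_nat_mono order_trans)
    then show ?thesis using L tuples by (meson order_trans)
  qed
  then show "bdd_above {d (f ns') (f ms') | ns' ms'. (ns', ms') \<in> H_pairs k i UNIV}"
    by (intro bdd_aboveI[of _ "\<bar>L\<bar> * real k"]) blast
qed (use P in blast)

lemma lipschitz_hamming_map:
  assumes lip: "lipschitz_hamming k d g" and h: "strict_mono h"
  shows "lipschitz_hamming k d (\<lambda>ns. g (map h ns))"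
proof -
  obtain L where L: "\<forall>ns\<in>incr_tuples k UNIV. \<forall>ms\<in>incr_tuples k UNIV. d (g ns) (g ms) \<le> L * real (hamming ns ms)"
    using lip unfolding lipschitz_hamming_def by blast
  have "d (g (map h ns)) (g (map h ms)) \<le> L * real (hamming ns ms)"
    if "ns \<in> incr_tuples k UNIV" "ms \<in> incr_tuples k UNIV" for ns ms
  proof -
    have "map h ns \<in> incr_tuples k UNIV" "map h ms \<in> incr_tuples k UNIV"
      using incr_tuples_map[OF h that(1)] incr_tuples_map[OF h that(2)] by (auto simp: incr_tuples_def)
    moreover have "hamming (map h ns) (map h ms) = hamming ns ms"
      using that strict_mono_imp_inj_on[OF h] by (intro hamming_map) (auto simp: incr_tuples_def)
    ultimately show ?thesis using L by metis
  qed
  then show ?thesis unfolding lipschitz_hamming_def by blast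
qed

section \<open>Ramsey stabilisation along H-pairs\<close>

lemma infinite_subset_refine_finite:
  assumes fin: "finite I" and N0: "infinite N0"
    and refine: "\<And>a N. a \<in> I \<Longrightarrow> N \<subseteq> N0 \<Longrightarrow> infinite N \<Longrightarrow> \<exists>N'\<subseteq>N. infinite N' \<and> P a N'"
    and hereditary: "\<And>a N N'. a \<in> I \<Longrightarrow> N' \<subseteq> N \<Longrightarrow> P a N \<Longrightarrow> P a N'"
  shows "\<exists>N\<subseteq>N0. infinite N \<and> (\<forall>a\<in>I. P a N)"
proof -
  have "\<exists>N\<subseteq>N0. infinite N \<and> (\<forall>a\<in>F. P a N)" if "finite F" "F \<subseteq> I" for F
    using that
  proof (induction F rule: finite_induct)
    case empty
    show ?case using N0 by blast
  next
    case (insert a F)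
    then obtain N where N: "N \<subseteq> N0" "infinite N" "\<forall>b\<in>F. P b N"
      by blast
    moreover obtain N' where N': "N' \<subseteq> N" "infinite N'" "P a N'"
      using refine[of a N] insert.prems N by blast
    ultimately have "\<forall>b\<in>insert a F. P b N'"
      using hereditary insert.prems by blast
    then show ?case using N N' by blast
  qed
  then show ?thesis using fin by blast
qed

lemma H_pairs_Ramsey_stabilise:
  fixes D :: "nat list \<Rightarrow> nat list \<Rightarrow> real"
  assumes N: "infinite N" and \<eta>: "0 < \<eta>" and i: "i < k"
    and bnd: "\<And>ns ms. (ns, ms) \<in> H_pairs k i N \<Longrightarrow> 0 \<le> D ns ms \<and> D ns ms \<le> B"
  shows "\<exists>N'\<subseteq>N. infinite N' \<and> (\<forall>ns ms ns' ms'. (ns, ms) \<in> H_pairs k i N' \<longrightarrow>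
           (ns', ms') \<in> H_pairs k i N' \<longrightarrow> D ns ms \<le> D ns' ms' + \<eta>)"
proof -
  \<comment> \<open>the eta-bucket of D on the encoded pair; capping at B keeps the number of colours finite\<close>
  define colour where
    "colour X = nat \<lfloor>min B (case_prod D (H_pair_of_list i (sorted_list_of_set X))) / \<eta>\<rfloor>" for X
  have "colour X \<le> nat \<lfloor>B / \<eta>\<rfloor>" for X
    unfolding colour_def
    by (rule nat_mono[OF floor_mono[OF divide_right_mono[OF min.cobounded1 less_imp_le[OF \<eta>]]]])
  then have "\<exists>Y t. Y \<subseteq> N \<and> infinite Y \<and> t < Suc (nat \<lfloor>B / \<eta>\<rfloor>) \<and>
      (\<forall>X. X \<subseteq> Y \<and> finite X \<and> card X = Suc k \<longrightarrow> colour X = t)"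
    by (intro Ramsey[OF N]) (simp add: le_imp_less_Suc)
  then obtain Y t where Y: "Y \<subseteq> N" "infinite Y"
    and hom: "\<forall>X. X \<subseteq> Y \<and> finite X \<and> card X = Suc k \<longrightarrow> colour X = t"
    by auto
  have bucket: "real t \<le> D ns ms / \<eta> \<and> D ns ms / \<eta> < real t + 1"
    if P: "(ns, ms) \<in> H_pairs k i Y" for ns ms
  proof -
    have PN: "(ns, ms) \<in> H_pairs k i N" using H_pairs_mono[OF Y(1)] P by blast
    note U = H_pair_of_list_union[OF P i]
    have "min B (D ns ms) = D ns ms"
      using bnd[OF PN] by (simp add: min_absorb2)
    then have "colour (set ns \<union> set ms) = nat \<lfloor>D ns ms / \<eta>\<rfloor>"
      unfolding colour_def U(4) prod.case by (simp only:)
    moreover have "0 \<le> \<lfloor>D ns ms / \<eta>\<rfloor>"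
      using bnd[OF PN] \<eta> by simp
    ultimately have "\<lfloor>D ns ms / \<eta>\<rfloor> = int t"
      using hom U(1-3) by (simp add: nat_eq_iff)
    then show ?thesis by (simp add: floor_eq_iff)
  qed
  have "D ns ms \<le> D ns' ms' + \<eta>"
    if "(ns, ms) \<in> H_pairs k i Y" "(ns', ms') \<in> H_pairs k i Y" for ns ms ns' ms'
  proof -
    have "D ns ms / \<eta> < (D ns' ms' + \<eta>) / \<eta>"
      using bucket[OF that(1)] bucket[OF that(2)] \<eta> by (simp add: add_divide_distrib)
    then show ?thesis using \<eta> by (simp add: divide_less_cancel)
  qed
  then show ?thesis using Y by blast
qed

lemma H_pairs_coordinates_stabilise:
  fixes f :: "nat list \<Rightarrow> nat \<Rightarrow> 'a::real_normed_vector"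
  assumes N: "infinite N" and \<eta>: "0 < \<eta>" and i: "i < k"
    and bnd: "\<And>ns ms j. (ns, ms) \<in> H_pairs k i N \<Longrightarrow> j < n \<Longrightarrow> norm (f ns j - f ms j) \<le> A"
  shows "\<exists>N'\<subseteq>N. infinite N' \<and> (\<forall>j\<in>{..<n}. \<forall>ns ms ns' ms'. (ns, ms) \<in> H_pairs k i N' \<longrightarrow>
           (ns', ms') \<in> H_pairs k i N' \<longrightarrow> norm (f ns j - f ms j) \<le> norm (f ns' j - f ms' j) + \<eta>)"
proof (rule infinite_subset_refine_finite[OF finite_lessThan N])
  fix j N' assume j: "j \<in> {..<n}" and N': "N' \<subseteq> N" "infinite N'"
  show "\<exists>N''\<subseteq>N'. infinite N'' \<and> (\<forall>ns ms ns' ms'. (ns, ms) \<in> H_pairs k i N'' \<longrightarrow>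
      (ns', ms') \<in> H_pairs k i N'' \<longrightarrow> norm (f ns j - f ms j) \<le> norm (f ns' j - f ms' j) + \<eta>)"
    by (rule H_pairs_Ramsey_stabilise[OF N'(2) \<eta> i])
      (use bnd j H_pairs_mono[OF N'(1)] norm_ge_zero in blast)
qed (use H_pairs_mono in blast)

lemma H_pairs_coordinate_bounds:
  fixes f :: "nat list \<Rightarrow> nat \<Rightarrow> 'a::real_normed_vector" and e :: "nat \<Rightarrow> 'e::real_normed_vector"
  assumes unc: "one_unconditional e" and nb: "normalized_basis e"
    and N: "infinite N" and \<delta>: "0 < \<delta>" and i: "i < k"
    and bnd: "\<And>ns ms. (ns, ms) \<in> H_pairs k i N \<Longrightarrow> sum_dist e n (f ns) (f ms) \<le> A"
  shows "\<exists>N'\<subseteq>N. infinite N' \<and> (\<exists>\<beta>. (\<forall>j. 0 \<le> \<beta> j) \<and> norm (\<Sum>j<n. \<beta> j *\<^sub>R e j) \<le> (1 + \<delta>) * A \<and>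
           (\<forall>ns ms j. (ns, ms) \<in> H_pairs k i N' \<longrightarrow> j < n \<longrightarrow> norm (f ns j - f ms j) \<le> \<beta> j))"
proof -
  have coord: "norm (f ns j - f ms j) \<le> A" if "(ns, ms) \<in> H_pairs k i N" "j < n" for ns ms j
    using order_trans[OF norm_coordinate_le_sum_dist[OF unc nb that(2)] bnd[OF that(1)]] .
  obtain ns0 ms0 where "(ns0, ms0) \<in> H_pairs k i N"
    using H_pairs_nonempty[OF i N] by blast
  then have "0 \<le> A" using bnd sum_dist_nonneg order_trans by blast
  then consider "A = 0" | "0 < A" by linarith
  then show ?thesis
  proof cases
    case 1
    then have "\<forall>ns ms j. (ns, ms) \<in> H_pairs k i N \<longrightarrow> j < n \<longrightarrow> norm (f ns j - f ms j) \<le> 0"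
      using coord by auto
    then show ?thesis
      using N 1 by (intro exI[of _ N] conjI exI[of _ "\<lambda>_. 0"]) auto
  next
    case 2
    define \<eta> where "\<eta> = \<delta> * A / (real n + 1)"
    have \<eta>: "0 < \<eta>" unfolding \<eta>_def using \<delta> 2 by simp
    obtain N' where N': "N' \<subseteq> N" "infinite N'"
      and stable: "\<forall>j\<in>{..<n}. \<forall>ns ms ns' ms'. (ns, ms) \<in> H_pairs k i N' \<longrightarrow>
        (ns', ms') \<in> H_pairs k i N' \<longrightarrow> norm (f ns j - f ms j) \<le> norm (f ns' j - f ms' j) + \<eta>"
      using H_pairs_coordinates_stabilise[OF N \<eta> i, where f = f and n = n and A = A] coord by blast
    obtain qs rs where Q: "(qs, rs) \<in> H_pairs k i N'"
      using H_pairs_nonempty[OF i N'(2)] by blast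
    define \<beta> where "\<beta> j = norm (f qs j - f rs j) + \<eta>" for j
    have "norm (\<Sum>j<n. \<beta> j *\<^sub>R e j) \<le> sum_dist e n (f qs) (f rs) + \<eta> * real n"
      unfolding \<beta>_def by (rule norm_shifted_coordinates_le[OF nb less_imp_le[OF \<eta>]])
    moreover have "sum_dist e n (f qs) (f rs) \<le> A"
      using bnd H_pairs_mono[OF N'(1)] Q by blast
    moreover have "\<eta> * real n \<le> \<delta> * A"
      unfolding \<eta>_def using \<delta> 2 by (simp add: field_simps)
    ultimately have "norm (\<Sum>j<n. \<beta> j *\<^sub>R e j) \<le> (1 + \<delta>) * A"
      by (simp add: algebra_simps)
    moreover have "\<forall>j. 0 \<le> \<beta> j" unfolding \<beta>_def using \<eta> by simp
    moreover have "\<forall>ns ms j. (ns, ms) \<in> H_pairs k i N' \<longrightarrow> j < n \<longrightarrow> norm (f ns j - f ms j) \<le> \<beta> j"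
      using stable Q unfolding \<beta>_def by blast
    ultimately show ?thesis using N' by blast
  qed
qed

lemma H_pairs_coordinate_bounds_all:
  fixes f :: "nat list \<Rightarrow> nat \<Rightarrow> 'a::real_normed_vector" and e :: "nat \<Rightarrow> 'e::real_normed_vector"
  assumes unc: "one_unconditional e" and nb: "normalized_basis e" and \<delta>: "0 < \<delta>"
    and bnd: "\<And>i ns ms. i < k \<Longrightarrow> (ns, ms) \<in> H_pairs k i UNIV \<Longrightarrow> sum_dist e n (f ns) (f ms) \<le> A i"
  obtains N \<beta> where "infinite N" and "\<And>i j. i < k \<Longrightarrow> 0 \<le> \<beta> i j"
    and "\<And>i. i < k \<Longrightarrow> norm (\<Sum>j<n. \<beta> i j *\<^sub>R e j) \<le> (1 + \<delta>) * A i"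
    and "\<And>i j ns ms. i < k \<Longrightarrow> j < n \<Longrightarrow> (ns, ms) \<in> H_pairs k i N \<Longrightarrow> norm (f ns j - f ms j) \<le> \<beta> i j"
proof -
  define bounds where "bounds i N \<beta> \<longleftrightarrow> (\<forall>j. 0 \<le> \<beta> j) \<and> norm (\<Sum>j<n. \<beta> j *\<^sub>R e j) \<le> (1 + \<delta>) * A i \<and>
      (\<forall>ns ms j. (ns, ms) \<in> H_pairs k i N \<longrightarrow> j < n \<longrightarrow> norm (f ns j - f ms j) \<le> \<beta> j)"
    for i N and \<beta> :: "nat \<Rightarrow> real"
  have "\<exists>N\<subseteq>UNIV. infinite N \<and> (\<forall>i\<in>{..<k}. \<exists>\<beta>. bounds i N \<beta>)"
  proof (rule infinite_subset_refine_finite[OF finite_lessThan infinite_UNIV_nat])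
    fix i and N :: "nat set" assume "i \<in> {..<k}" and N: "infinite N"
    then have i: "i < k" by simp
    show "\<exists>N'\<subseteq>N. infinite N' \<and> (\<exists>\<beta>. bounds i N' \<beta>)"
      unfolding bounds_def using bnd[OF i] H_pairs_mono[of N UNIV k i]
      by (intro H_pairs_coordinate_bounds[OF unc nb N \<delta> i]) auto
  next
    fix i and N N' :: "nat set" assume sub: "N' \<subseteq> N" and "\<exists>\<beta>. bounds i N \<beta>"
    then obtain \<beta> where "bounds i N \<beta>" by blast
    then have "bounds i N' \<beta>"
      unfolding bounds_def using subsetD[OF H_pairs_mono[OF sub, of k i]] by simp
    then show "\<exists>\<beta>. bounds i N' \<beta>" by blast
  qed
  then obtain N where N: "infinite N" and G: "\<forall>i\<in>{..<k}. \<exists>\<beta>. bounds i N \<beta>"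
    by blast
  from G have "\<exists>\<beta>. \<forall>i\<in>{..<k}. bounds i N (\<beta> i)"
    by (rule bchoice)
  then obtain \<beta> where \<beta>: "\<And>i. i < k \<Longrightarrow> bounds i N (\<beta> i)"
    by blast
  show ?thesis
  proof (rule that[OF N])
    fix i j ns ms assume "i < k"
    then show "0 \<le> \<beta> i j" and "norm (\<Sum>j<n. \<beta> i j *\<^sub>R e j) \<le> (1 + \<delta>) * A i"
      and "j < n \<Longrightarrow> (ns, ms) \<in> H_pairs k i N \<Longrightarrow> norm (f ns j - f ms j) \<le> \<beta> i j"
      using \<beta> unfolding bounds_def by simp_all
  qed
qed

section \<open>Applying HIC coordinatewise\<close>

lemma HIC_on_infinite_subset:
  fixes g :: "nat list \<Rightarrow> 'a::metric_space"
  assumes hic: "HIC lam p M dist" and img: "g ` incr_tuples k UNIV \<subseteq> M"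
    and lip: "lipschitz_hamming k dist g" and N: "infinite N"
    and bnd: "\<And>i ns ms. i < k \<Longrightarrow> (ns, ms) \<in> H_pairs k i N \<Longrightarrow> dist (g ns) (g ms) \<le> \<beta> i"
    and lam: "0 \<le> lam" and p: "0 < p"
  shows "\<exists>N'\<subseteq>N. infinite N' \<and>
           (\<forall>(ns, ms)\<in>I_pairs k N'. dist (g ns) (g ms) \<le> lam * (\<Sum>i<k. \<beta> i powr p) powr (1/p))"
proof -
  \<comment> \<open>HIC is applied to g transported along the enumeration of N, whose H-suprema are at most beta\<close>
  define h where "h = enumerate N"
  have h: "strict_mono h" and range_h: "range h = N"
    using N unfolding h_def by (simp_all add: strict_mono_enumerate range_enumerate)
  define g' where "g' ns = g (map h ns)" for ns
  define S where "S i = Sup {dist (g' ns) (g' ms) | ns ms. (ns, ms) \<in> H_pairs k i UNIV}" for i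
  have "g' ` incr_tuples k UNIV \<subseteq> M"
    using img incr_tuples_map[OF h] unfolding g'_def incr_tuples_def by fastforce
  moreover have lip': "lipschitz_hamming k dist g'"
    unfolding g'_def by (rule lipschitz_hamming_map[OF lip h])
  ultimately obtain N0 where N0: "infinite N0"
    and ineq: "\<forall>(ns, ms)\<in>I_pairs k N0. dist (g' ns) (g' ms) \<le> lam * (\<Sum>i<k. S i powr p) powr (1/p)"
    using hic unfolding HIC_def S_def by blast
  have "0 \<le> S i \<and> S i \<le> \<beta> i" if i: "i < k" for i
  proof
    obtain ns ms where P: "(ns, ms) \<in> H_pairs k i UNIV"
      using H_pairs_nonempty[OF i] by blast
    show "0 \<le> S i"
      using H_pairs_le_Sup[OF lip' P] unfolding S_def by (meson zero_le_dist order_trans)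
    have "dist (g' ns') (g' ms') \<le> \<beta> i" if "(ns', ms') \<in> H_pairs k i UNIV" for ns' ms'
      using bnd[OF i] H_pairs_map[OF h that i] range_h unfolding g'_def by auto
    then show "S i \<le> \<beta> i"
      unfolding S_def using P by (intro cSup_least) auto
  qed
  then have "lam * (\<Sum>i<k. S i powr p) powr (1/p) \<le> lam * (\<Sum>i<k. \<beta> i powr p) powr (1/p)"
    using lam p by (intro mult_left_mono powr_mono2 sum_mono sum_nonneg) auto
  moreover have "dist (g ns) (g ms) \<le> lam * (\<Sum>i<k. S i powr p) powr (1/p)"
    if "(ns, ms) \<in> I_pairs k (h ` N0)" for ns ms
    using ineq I_pairs_pullback[OF h that] unfolding g'_def by fastforce
  moreover have "h ` N0 \<subseteq> N"
    using range_h by auto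
  moreover have "infinite (h ` N0)"
    using N0 finite_imageD[OF _ strict_mono_imp_inj_on[OF h]] by blast
  ultimately show ?thesis by (intro exI[of _ "h ` N0"]) fastforce
qed

lemma lipschitz_hamming_coordinate:
  fixes e :: "nat \<Rightarrow> 'e::real_normed_vector" and f :: "nat list \<Rightarrow> nat \<Rightarrow> 'a::real_normed_vector"
  assumes "one_unconditional e" and "normalized_basis e" and "j < n"
    and lip: "lipschitz_hamming k (sum_dist e n) f"
  shows "lipschitz_hamming k dist (\<lambda>ns. f ns j)"
  using lip order_trans[OF norm_coordinate_le_sum_dist[OF assms(1-3)]]
  unfolding lipschitz_hamming_def dist_norm by meson

lemma coordinatewise_HIC:
  fixes e :: "nat \<Rightarrow> 'e::real_normed_vector" and f :: "nat list \<Rightarrow> nat \<Rightarrow> 'a::real_normed_vector"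
  assumes unc: "one_unconditional e" and nb: "normalized_basis e"
    and hic: "\<forall>j<n. HIC lam p (X j) dist" and lam: "0 \<le> lam" and p: "0 < p"
    and img: "f ` incr_tuples k UNIV \<subseteq> sum_space n X" and lip: "lipschitz_hamming k (sum_dist e n) f"
    and N: "infinite N"
    and bnd: "\<And>i j ns ms. i < k \<Longrightarrow> j < n \<Longrightarrow> (ns, ms) \<in> H_pairs k i N \<Longrightarrow> norm (f ns j - f ms j) \<le> \<beta> i j"
  obtains N' where "infinite N'"
    and "\<And>j ns ms. j < n \<Longrightarrow> (ns, ms) \<in> I_pairs k N' \<Longrightarrow>
           norm (f ns j - f ms j) \<le> lam * (\<Sum>i<k. \<beta> i j powr p) powr (1/p)"
proof -
  define good where "good j N' \<longleftrightarrow> (\<forall>(ns, ms)\<in>I_pairs k N'.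
      dist (f ns j) (f ms j) \<le> lam * (\<Sum>i<k. \<beta> i j powr p) powr (1/p))" for j N'
  have "\<exists>N'\<subseteq>N. infinite N' \<and> (\<forall>j\<in>{..<n}. good j N')"
  proof (rule infinite_subset_refine_finite[OF finite_lessThan N])
    fix j N' assume j: "j \<in> {..<n}" and N': "N' \<subseteq> N" "infinite N'"
    show "\<exists>N''\<subseteq>N'. infinite N'' \<and> good j N''"
      unfolding good_def
    proof (rule HIC_on_infinite_subset[OF _ _ _ N'(2) _ lam p])
      show "HIC lam p (X j) dist" using hic j by blast
      show "(\<lambda>ns. f ns j) ` incr_tuples k UNIV \<subseteq> X j"
        using img j unfolding sum_space_def by auto
      show "lipschitz_hamming k dist (\<lambda>ns. f ns j)"
        using j by (intro lipschitz_hamming_coordinate[OF unc nb _ lip]) simp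
      show "dist (f ns j) (f ms j) \<le> \<beta> i j" if "i < k" "(ns, ms) \<in> H_pairs k i N'" for i ns ms
        using bnd[OF that(1)] j H_pairs_mono[OF N'(1)] that(2) unfolding dist_norm by blast
    qed
  next
    fix j and N1 N2 :: "nat set" assume "N2 \<subseteq> N1" "good j N1"
    then show "good j N2"
      unfolding good_def using I_pairs_mono[of N2 N1 k] by blast
  qed
  then show ?thesis
    using that unfolding good_def dist_norm by blast
qed

lemma sum_space_interlaced_bound:
  fixes e :: "nat \<Rightarrow> 'e::real_normed_vector" and f :: "nat list \<Rightarrow> nat \<Rightarrow> 'a::real_normed_vector"
  assumes unc: "one_unconditional e" and nb: "normalized_basis e" and pc: "p_convex_one p e"
    and p: "0 < p" and lam: "0 \<le> lam" and hic: "\<forall>j<n. HIC lam p (X j) dist" and \<delta>: "0 < \<delta>"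
    and img: "f ` incr_tuples k UNIV \<subseteq> sum_space n X" and lip: "lipschitz_hamming k (sum_dist e n) f"
  shows "\<exists>N. infinite N \<and> (\<forall>(ns, ms)\<in>I_pairs k N. sum_dist e n (f ns) (f ms) \<le> lam * (1 + \<delta>) *
           (\<Sum>i<k. Sup {sum_dist e n (f ns') (f ms') | ns' ms'. (ns', ms') \<in> H_pairs k i UNIV} powr p) powr (1/p))"
proof -
  define \<alpha> where "\<alpha> i = Sup {sum_dist e n (f ns) (f ms) | ns ms. (ns, ms) \<in> H_pairs k i UNIV}" for i
  have \<alpha>: "sum_dist e n (f ns) (f ms) \<le> \<alpha> i"
    if "i < k" and "(ns, ms) \<in> H_pairs k i UNIV" for i ns ms
    unfolding \<alpha>_def by (rule H_pairs_le_Sup[OF lip that(2)])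
  have \<alpha>_nonneg: "0 \<le> \<alpha> i" if i: "i < k" for i
  proof -
    obtain ns ms where "(ns, ms) \<in> H_pairs k i UNIV"
      using H_pairs_nonempty[OF i infinite_UNIV_nat] by blast
    then show ?thesis using order_trans[OF sum_dist_nonneg \<alpha>[OF i]] by blast
  qed
  obtain N \<beta> where N: "infinite N" and \<beta>: "\<And>i j. i < k \<Longrightarrow> 0 \<le> \<beta> i j"
    and rows: "\<And>i. i < k \<Longrightarrow> norm (\<Sum>j<n. \<beta> i j *\<^sub>R e j) \<le> (1 + \<delta>) * \<alpha> i"
    and H_bound: "\<And>i j ns ms. i < k \<Longrightarrow> j < n \<Longrightarrow> (ns, ms) \<in> H_pairs k i N \<Longrightarrow>
      norm (f ns j - f ms j) \<le> \<beta> i j"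
    by (rule H_pairs_coordinate_bounds_all[OF unc nb \<delta>, where A = \<alpha> and f = f and k = k and n = n, OF \<alpha> that])
  obtain N' where N': "infinite N'" and I_bound: "\<And>j ns ms. j < n \<Longrightarrow> (ns, ms) \<in> I_pairs k N' \<Longrightarrow>
      norm (f ns j - f ms j) \<le> lam * (\<Sum>i<k. \<beta> i j powr p) powr (1/p)"
    by (rule coordinatewise_HIC[where \<beta> = \<beta>, OF unc nb hic lam p img lip N H_bound that])
  have scale: "(\<Sum>i<k. ((1 + \<delta>) * \<alpha> i) powr p) powr (1/p) = (1 + \<delta>) * (\<Sum>i<k. \<alpha> i powr p) powr (1/p)"
    using \<delta> \<alpha>_nonneg by (intro sum_powr_scale[OF _ p]) auto
  have bound: "sum_dist e n (f ns) (f ms) \<le> lam * (1 + \<delta>) * (\<Sum>i<k. \<alpha> i powr p) powr (1/p)"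
    if "(ns, ms) \<in> I_pairs k N'" for ns ms
    using sum_dist_le_of_coordinate_bounds[OF unc pc p lam \<beta> rows I_bound[OF _ that]]
    by (simp only: scale mult.assoc)
  show ?thesis
    unfolding \<alpha>_def[symmetric]
  proof (intro exI[of _ N'] conjI N' ballI)
    fix P assume "P \<in> I_pairs k N'"
    then show "case P of (ns, ms) \<Rightarrow> sum_dist e n (f ns) (f ms) \<le> lam * (1 + \<delta>) * (\<Sum>i<k. \<alpha> i powr p) powr (1/p)"
      using bound by (cases P) simp
  qed
qed

theorem proposition3:
  fixes p lam :: real and e :: "nat \<Rightarrow> 'e::banach"
    and n :: nat and X :: "nat \<Rightarrow> 'a::banach set"
  assumes "1 < p" and "0 < lam"
    and "schauder_basis e" and "normalized_basis e" and "one_unconditional e"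
    and "p_convex_one p e"
    and "\<forall>j<n. subspace (X j) \<and> closed (X j)"
    and "\<forall>j<n. HIC lam p (X j) dist"
  shows "\<forall>\<epsilon>>0. HIC (lam + \<epsilon>) p (sum_space n X) (sum_dist e n)"
proof (intro allI impI)
  fix \<epsilon> :: real assume "0 < \<epsilon>"
  then have \<delta>: "0 < \<epsilon> / lam" and scale: "lam + \<epsilon> = lam * (1 + \<epsilon> / lam)"
    using assms(2) by (simp_all add: field_simps)
  have p: "0 < p" and lam: "0 \<le> lam" using assms(1,2) by simp_all
  show "HIC (lam + \<epsilon>) p (sum_space n X) (sum_dist e n)"
    unfolding HIC_def scale
    using sum_space_interlaced_bound[OF assms(5,4,6) p lam assms(8) \<delta>] by blast
qed

end
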